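(* Let $p$ be an odd prime, $t,s$ positive integers, $r=p^t$, $q=r^s$, $T=q+1$, and let $\chi(x)=\zeta_p^{\mathrm{Tr}_{q^2/p}(x)}$ ($\zeta_p=e^{2\pi i/p}$) be the canonical additive character of $\mathbb{F}_{q^2}$. For $a\in\mathbb{F}_{q^2}^*$ let $$P=\sum_{x\in\mathbb{F}_{q^2},\ \mathrm{Tr}_{q/r}(x^T)=0}\chi(ax).$$ Then $P=-\frac{q}{r}(r-1)$ if $\mathrm{Tr}_{q/r}(a^T)=0$, and $P=\frac{q}{r}$ if $\mathrm{Tr}_{q/r}(a^T)\neq0$.
   Context: $\mathrm{Tr}_{q/r}$ is the trace from $\mathbb{F}_q$ to $\mathbb{F}_r$ and $\mathrm{Tr}_{q^2/p}$ the absolute trace of $\mathbb{F}_{q^2}$; note $x^{q+1}\in\mathbb{F}_q$ for $x\in\mathbb{F}_{q^2}$. *)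

theory Defs
  imports Complex_Main "HOL-Computational_Algebra.Primes"
begin

definition rel_trace :: "nat \<Rightarrow> nat \<Rightarrow> 'a::field \<Rightarrow> 'a" where
  "rel_trace r s y = (\<Sum>i<s. y ^ (r ^ i))"

definition abs_trace :: "nat \<Rightarrow> nat \<Rightarrow> 'a::field \<Rightarrow> 'a" where
  "abs_trace p n x = (\<Sum>i<n. x ^ (p ^ i))"

text \<open>Canonical additive character of F_{p^n}: zeta_p to the power of the absolute trace,
  the trace (an element of the prime field) being identified with its representative k < p.\<close>
definition add_char :: "nat \<Rightarrow> nat \<Rightarrow> 'a::field \<Rightarrow> complex" where
  "add_char p n x = exp (2 * pi * \<i> * of_nat (THE k. k < p \<and> of_nat k = abs_trace p n x) / of_nat p)"

end

theory Submission
  imports Defs "HOL-Computational_Algebra.Polynomial" "HOL-Number_Theory.Cong"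
    "HOL-Analysis.Complex_Transcendental"
begin

text \<open>
  For u in F_q the character sum over c in F_r of chi(c u) equals r if Tr_{q/r}(u) = 0 and 0 otherwise,
  since chi(c u) only depends on Tr_{r/p}(c Tr_{q^2/r}(u)) and Tr_{q^2/r}(u) = 2 Tr_{q/r}(u).
  Applying this to u = x^(q+1) and exchanging sums gives r P as a sum over c in F_r of the sums
  S(c) of chi(c x^(q+1) + a x) over F_{q^2}. The term c = 0 vanishes because a is nonzero. For
  c nonzero, completing the square turns S(c) into chi(-a^(q+1)/(4c)) times the sum of
  chi(c y^(q+1)), and the latter is -q because the norm y^(q+1) maps F_{q^2} onto F_q with fibres
  of size q+1 over nonzero points. Finally c \<mapsto> -1/(4c) permutes the nonzero elements of F_r, so
  the indicator sum appears once more, now evaluated at a^(q+1).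
\<close>

section \<open>Finite fields\<close>

lemma finite_field_power_card:
  fixes x :: "'a::{field,finite}"
  shows "x ^ CARD('a) = x"
proof (cases "x = 0")
  case False
  define U where "U = UNIV - {0 :: 'a}"
  have "bij_betw ((*) x) U U"
    using False by (intro bij_betwI[of _ _ _ "\<lambda>y. y / x"]) (auto simp: U_def)
  hence "x ^ card U * (\<Prod>y\<in>U. y) = (\<Prod>y\<in>U. y)"
    using prod.reindex_bij_betw[of "(*) x" U U "\<lambda>y. y"] by (simp add: prod.distrib)
  hence "x ^ card U = 1"
    by (simp add: U_def)
  moreover have "CARD('a) = Suc (card U)"
    using finite_UNIV_card_ge_0[where 'a='a] by (simp add: U_def card_Diff_singleton)
  ultimately show ?thesis
    by simp
qed (simp add: finite_UNIV_card_ge_0)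

lemma card_roots_power_eq_affine_le:
  fixes a b :: "'a::idom"
  assumes "2 \<le> k"
  shows "card {x. x ^ k = a * x + b} \<le> k"
proof -
  define f where "f = Polynomial.monom 1 k - [:b, a:]"
  have "coeff f k = 1"
    using assms by (simp add: f_def coeff_pCons split: nat.split)
  hence "f \<noteq> 0"
    by auto
  have "degree f \<le> k"
    unfolding f_def using degree_pCons_le[of b "[:a:]"] assms
    by (intro degree_diff_le degree_monom_le) auto
  moreover have "{x. x ^ k = a * x + b} = {x. poly f x = 0}"
    by (auto simp: f_def poly_monom algebra_simps)
  ultimately show ?thesis
    using card_poly_roots_bound[OF \<open>f \<noteq> 0\<close>] by simp
qed

lemma two_le_card_field: "2 \<le> CARD('a::{field,finite})"
  using card_mono[of UNIV "{0, 1 :: 'a}"] by simp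

lemma card_fixed_points_power:
  assumes "2 \<le> k" and "(k - 1) dvd (CARD('a::{field,finite}) - 1)"
  shows "card {x::'a. x ^ k = x} = k"
proof (rule antisym)
  show "card {x::'a. x ^ k = x} \<le> k"
    using card_roots_power_eq_affine_le[OF assms(1), of 1 0] by simp
next
  define N M where "N = CARD('a)" and "M = k - 1"
  obtain e where e: "N - 1 = M * e"
    using assms(2) unfolding N_def M_def by blast
  have "2 \<le> N"
    unfolding N_def by (rule two_le_card_field)
  hence N_eq: "N = Suc (M * e)"
    using e by simp
  have "e \<ge> 1"
    using N_eq \<open>2 \<le> N\<close> by (cases e) auto
  hence "k \<le> N"
    using e assms(1) mult_le_mono2[of 1 e M] unfolding M_def by linarith
  define g :: "'a poly" where "g = (\<Sum>j<e. Polynomial.monom 1 (M * j))"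
  have poly_g: "poly g x = (\<Sum>j<e. (x ^ M) ^ j)" for x
    by (simp add: g_def poly_sum poly_monom power_mult)
  have "poly g 0 = 1"
    unfolding poly_g M_def using assms(1) \<open>e \<ge> 1\<close> by (simp add: power_0_left)
  hence "g \<noteq> 0"
    by auto
  have "degree g \<le> M * (e - 1)"
    unfolding g_def by (rule degree_sum_le) (auto intro!: order.trans[OF degree_monom_le])
  also have "M * (e - 1) = N - k"
    using e assms(1) unfolding M_def by (simp add: diff_mult_distrib2)
  finally have deg_g: "degree g \<le> N - k" .
  have "(x ^ k - x) * poly g x = 0" for x :: 'a
  proof -
    have "(x ^ k - x) * poly g x = x * ((x ^ M - 1) * (\<Sum>j<e. (x ^ M) ^ j))"
      using assms(1) unfolding poly_g M_def by (simp add: algebra_simps flip: power_Suc)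
    also have "\<dots> = x * ((x ^ M) ^ e - 1)"
      by (simp only: power_diff_1_eq)
    also have "\<dots> = x ^ N - x"
      by (simp add: N_eq right_diff_distrib power_mult)
    finally show ?thesis
      using finite_field_power_card[of x] by (simp add: N_def)
  qed
  hence "UNIV = {x::'a. x ^ k = x} \<union> {x. poly g x = 0}"
    by auto
  hence "N \<le> card {x::'a. x ^ k = x} + card {x. poly g x = 0}"
    unfolding N_def by (metis card_Un_le)
  thus "k \<le> card {x::'a. x ^ k = x}"
    using card_poly_roots_bound[OF \<open>g \<noteq> 0\<close>] deg_g \<open>k \<le> N\<close> by linarith
qed

lemma minus_one_dvd_power_minus_one: "((b::nat) - 1) dvd (b ^ e - 1)"
proof (cases "b = 0")
  case False
  hence "[b = 1] (mod b - 1)"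
    by (simp add: cong_altdef_nat)
  hence "[b ^ e = 1] (mod b - 1)"
    using cong_pow by fastforce
  thus ?thesis
    using False by (simp add: cong_altdef_nat)
qed (simp add: power_0_left)

lemma power_power_fixed: "(x::'a::monoid_mult) ^ c = x \<Longrightarrow> x ^ (c ^ k) = x"
  by (induction k) (simp_all add: power_mult mult.commute power_Suc2 del: power_Suc)

lemma sum_lessThan_shift_cyclic:
  fixes f :: "nat \<Rightarrow> 'b::cancel_comm_monoid_add"
  assumes "f d = f 0"
  shows "(\<Sum>i<d. f (Suc i)) = (\<Sum>i<d. f i)"
  using sum.lessThan_Suc_shift[of f d] sum.lessThan_Suc[of f d] assms by (simp add: add.commute)

lemma sum_lessThan_mult_blocks:
  fixes f :: "nat \<Rightarrow> 'b::comm_monoid_add"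
  shows "(\<Sum>i<m * d. f i) = (\<Sum>k<d. \<Sum>j<m. f (m * k + j))"
proof -
  have "(\<Sum>i<m * d. f i) = (\<Sum>k<d. \<Sum>i\<in>{k * m..<k * m + m}. f i)"
    using sum.nat_group[of f m d] by (simp add: mult.commute)
  also have "\<dots> = (\<Sum>k<d. \<Sum>j<m. f (m * k + j))"
  proof (rule sum.cong[OF refl])
    fix k
    have "(\<Sum>i\<in>{0 + k * m..<m + k * m}. f i) = (\<Sum>j\<in>{0..<m}. f (j + k * m))"
      by (rule sum.shift_bounds_nat_ivl)
    thus "(\<Sum>i\<in>{k * m..<k * m + m}. f i) = (\<Sum>j<m. f (m * k + j))"
      by (simp add: atLeast0LessThan add.commute mult.commute)
  qed
  finally show ?thesis .
qed

lemma rel_trace_mult_period: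
  fixes u :: "'a::field"
  assumes "u ^ (b ^ s) = u"
  shows "rel_trace b (s * j) u = of_nat j * rel_trace b s u"
proof -
  have "rel_trace b (s * j) u = (\<Sum>k<j. \<Sum>i<s. u ^ (b ^ (s * k + i)))"
    unfolding rel_trace_def by (rule sum_lessThan_mult_blocks)
  also have "\<dots> = (\<Sum>k<j. rel_trace b s u)"
    unfolding rel_trace_def
    by (intro sum.cong refl) (simp add: power_add power_mult power_power_fixed[OF assms])
  finally show ?thesis
    by simp
qed

section \<open>Frobenius, subfields and traces\<close>

context
  fixes p n :: nat
  assumes prime_p: "prime p"
    and card_UNIV: "CARD('a::{field,finite}) = p ^ n"
begin

lemma CHAR_eq: "CHAR('a) = p"
proof -
  have "(\<Sum>y\<in>UNIV. 1 + y) = (\<Sum>y\<in>UNIV. y :: 'a)"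
    by (rule sum.reindex_bij_witness[of _ "\<lambda>y. y - 1" "\<lambda>y. 1 + y"]) auto
  hence "of_nat CARD('a) = (0::'a)"
    by (simp add: sum.distrib)
  hence "CHAR('a) dvd p ^ n"
    using card_UNIV of_nat_eq_0_iff_char_dvd by metis
  moreover have "prime CHAR('a)"
    using prime_CHAR_semidom finite_imp_CHAR_pos[where 'a='a] by simp
  ultimately show ?thesis
    using prime_p by (metis prime_dvd_power primes_dvd_imp_eq)
qed

lemma of_nat_eq_of_nat_below_char:
  assumes "i < p" and "j < p"
  shows "(of_nat i :: 'a) = of_nat j \<longleftrightarrow> i = j"
  using assms by (simp add: of_nat_eq_iff_cong_CHAR CHAR_eq cong_def)

lemma n_pos: "0 < n"
  using two_le_card_field[where 'a='a] card_UNIV by (cases n) auto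

lemma power_card_eq: "(x::'a) ^ (p ^ n) = x"
  using finite_field_power_card[of x] card_UNIV by simp

lemma add_power_prime_power: "((x::'a) + y) ^ (p ^ k) = x ^ (p ^ k) + y ^ (p ^ k)"
  using freshmans_dream'[where 'a='a, of "p ^ k" k] CHAR_eq prime_p by simp

lemma sum_power_prime_power: "(\<Sum>i\<in>A. f i :: 'a) ^ (p ^ k) = (\<Sum>i\<in>A. f i ^ (p ^ k))"
  using freshmans_dream_sum'[where 'a='a, of "p ^ k" k] CHAR_eq prime_p by simp

lemma minus_power_prime_power: "(- x :: 'a) ^ (p ^ k) = - (x ^ (p ^ k))"
proof -
  have "x ^ (p ^ k) + (- x) ^ (p ^ k) = 0"
    using add_power_prime_power[of x "- x" k] prime_gt_0_nat[OF prime_p] by (simp add: power_0_left)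
  thus ?thesis
    by (simp add: eq_neg_iff_add_eq_0 add.commute)
qed

lemma of_nat_power_prime: "(of_nat j :: 'a) ^ p = of_nat j"
proof (induction j)
  case (Suc j)
  have "(of_nat (Suc j) :: 'a) ^ p = (of_nat j + 1) ^ (p ^ 1)"
    by (simp add: add.commute)
  also have "\<dots> = of_nat j + 1"
    using Suc by (simp only: add_power_prime_power) simp
  finally show ?case
    by (simp add: add.commute)
qed (simp add: zero_power prime_gt_0_nat[OF prime_p])

lemma card_subfield:
  assumes "0 < m" and "m dvd n"
  shows "card {x::'a. x ^ (p ^ m) = x} = p ^ m"
proof (rule card_fixed_points_power)
  show "2 \<le> p ^ m"
    using prime_ge_2_nat[OF prime_p] self_le_power[of p m] assms(1) by simp
  obtain e where "n = m * e"
    using assms(2) by blast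
  thus "(p ^ m - 1) dvd (CARD('a) - 1)"
    using card_UNIV minus_one_dvd_power_minus_one[of "p ^ m" e] by (simp add: power_mult)
qed

lemma prime_subfield:
  assumes "(y::'a) ^ p = y"
  shows "\<exists>k<p. of_nat k = y"
proof -
  have "inj_on (of_nat :: nat \<Rightarrow> 'a) {..<p}"
    by (auto simp: inj_on_def of_nat_eq_of_nat_below_char)
  hence "card (of_nat ` {..<p} :: 'a set) = card {y::'a. y ^ (p ^ 1) = y}"
    using card_subfield[of 1] n_pos by (simp add: card_image)
  hence "of_nat ` {..<p} = {y::'a. y ^ p = y}"
    by (intro card_subset_eq) (auto simp: of_nat_power_prime)
  hence "y \<in> of_nat ` {..<p}"
    using assms by simp
  thus ?thesis
    by auto
qed

lemma abs_trace_zero: "abs_trace p m (0::'a) = 0"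
  using prime_gt_0_nat[OF prime_p] by (simp add: abs_trace_def power_0_left)

lemma abs_trace_add: "abs_trace p m ((x::'a) + y) = abs_trace p m x + abs_trace p m y"
  unfolding abs_trace_def by (simp add: add_power_prime_power sum.distrib)

lemma rel_trace_fixed:
  assumes "(u::'a) ^ ((p ^ m) ^ d) = u"
  shows "rel_trace (p ^ m) d u ^ (p ^ m) = rel_trace (p ^ m) d u"
proof -
  have "rel_trace (p ^ m) d u ^ (p ^ m) = (\<Sum>i<d. u ^ ((p ^ m) ^ Suc i))"
    unfolding rel_trace_def by (simp add: sum_power_prime_power mult.commute flip: power_mult)
  also have "\<dots> = rel_trace (p ^ m) d u"
    unfolding rel_trace_def by (rule sum_lessThan_shift_cyclic) (simp add: assms)
  finally show ?thesis .
qed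

lemma power_prime_abs_trace: "abs_trace p n (x::'a) ^ p = abs_trace p n x"
  using rel_trace_fixed[of x 1 n] power_card_eq by (simp add: abs_trace_def rel_trace_def)

lemma abs_trace_power_prime_power: "abs_trace p n ((x::'a) ^ (p ^ k)) = abs_trace p n x"
proof -
  have "abs_trace p n (x ^ (p ^ k)) = abs_trace p n x ^ (p ^ k)"
    unfolding abs_trace_def by (simp add: sum_power_prime_power mult.commute flip: power_mult)
  thus ?thesis
    using power_power_fixed[OF power_prime_abs_trace] by simp
qed

lemma abs_trace_diff_power_prime_power: "abs_trace p n ((x::'a) - x ^ (p ^ k)) = 0"
  using abs_trace_add[of n "x - x ^ (p ^ k)" "x ^ (p ^ k)"] abs_trace_power_prime_power[of x k] by simp

lemma abs_trace_tower:
  assumes "(c::'a) ^ (p ^ m) = c"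
  shows "abs_trace p (m * d) (c * w) = abs_trace p m (c * rel_trace (p ^ m) d w)"
proof -
  have "abs_trace p (m * d) (c * w) = (\<Sum>k<d. \<Sum>j<m. (c * w) ^ (p ^ (m * k + j)))"
    unfolding abs_trace_def by (rule sum_lessThan_mult_blocks)
  also have "\<dots> = (\<Sum>k<d. \<Sum>j<m. (c * w ^ ((p ^ m) ^ k)) ^ (p ^ j))"
    by (simp add: power_add power_mult power_mult_distrib power_power_fixed[OF assms])
  also have "\<dots> = (\<Sum>j<m. (\<Sum>k<d. c * w ^ ((p ^ m) ^ k)) ^ (p ^ j))"
    by (subst sum.swap) (simp only: sum_power_prime_power)
  also have "\<dots> = abs_trace p m (c * rel_trace (p ^ m) d w)"
    unfolding abs_trace_def rel_trace_def by (simp add: sum_distrib_left)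
  finally show ?thesis .
qed

lemma abs_trace_not_identically_zero:
  assumes "0 < m" and "m dvd n"
  shows "\<exists>v::'a. v ^ (p ^ m) = v \<and> abs_trace p m v \<noteq> 0"
proof (rule ccontr)
  assume trace_vanishes: "\<not> ?thesis"
  define f :: "'a poly" where "f = (\<Sum>i<m. Polynomial.monom 1 (p ^ i))"
  have p_ge_2: "2 \<le> p"
    using prime_ge_2_nat[OF prime_p] .
  have "p ^ i = p ^ j \<longleftrightarrow> i = j" for i j
    using p_ge_2 by (simp add: power_inject_exp)
  hence "coeff f (p ^ (m - 1)) = (\<Sum>i<m. if i = m - 1 then 1 else 0)"
    unfolding f_def by (simp add: coeff_sum coeff_monom eq_commute)
  hence "f \<noteq> 0"
    using assms(1) by auto
  have "degree f \<le> p ^ (m - 1)"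
    unfolding f_def using p_ge_2
    by (intro degree_sum_le) (auto intro!: order.trans[OF degree_monom_le] power_increasing)
  have "{v::'a. v ^ (p ^ m) = v} \<subseteq> {v. poly f v = 0}"
    using trace_vanishes by (auto simp: f_def poly_sum poly_monom abs_trace_def)
  hence "card {v::'a. v ^ (p ^ m) = v} \<le> card {v. poly f v = 0}"
    by (intro card_mono) simp_all
  also have "\<dots> \<le> p ^ (m - 1)"
    using card_poly_roots_bound[OF \<open>f \<noteq> 0\<close>] \<open>degree f \<le> _\<close> by linarith
  also have "\<dots> < p ^ m"
    using p_ge_2 assms(1) by (intro power_strict_increasing) auto
  finally show False
    using card_subfield[OF assms] by simp
qed

lemma abs_trace_mult_nondegenerate:
  assumes "0 < m" and "m dvd n" and "(z::'a) ^ (p ^ m) = z" and "z \<noteq> 0"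
  shows "\<exists>c. c ^ (p ^ m) = c \<and> abs_trace p m (c * z) \<noteq> 0"
proof -
  obtain v :: 'a where "v ^ (p ^ m) = v" and "abs_trace p m v \<noteq> 0"
    using abs_trace_not_identically_zero[OF assms(1,2)] by blast
  thus ?thesis
    using assms(3,4) by (intro exI[of _ "v / z"]) (simp add: power_divide)
qed

subsection \<open>The canonical additive character\<close>

lemma add_char_eq_root_of_unity:
  assumes "k < p" and "of_nat k = abs_trace p n (x::'a)"
  shows "add_char p n x = exp (2 * of_real pi * \<i> * of_nat k / of_nat p)"
proof -
  have "(THE k. k < p \<and> of_nat k = abs_trace p n x) = k"
  proof (rule the_equality)
    fix k' assume "k' < p \<and> of_nat k' = abs_trace p n x"
    thus "k' = k"
      using assms of_nat_eq_of_nat_below_char[of k' k] by simp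
  qed (use assms in simp)
  thus ?thesis
    unfolding add_char_def by simp
qed

lemma abs_trace_in_prime_field: "\<exists>k<p. of_nat k = abs_trace p n (x::'a)"
  by (rule prime_subfield[OF power_prime_abs_trace])

lemma add_char_add: "add_char p n ((x::'a) + y) = add_char p n x * add_char p n y"
proof -
  define \<omega> where "\<omega> k = exp (2 * of_real pi * \<i> * of_nat k / of_nat p)" for k
  obtain i j where i: "i < p" "of_nat i = abs_trace p n x" and j: "j < p" "of_nat j = abs_trace p n y"
    using abs_trace_in_prime_field by meson
  have "of_nat ((i + j) mod p) = (of_nat (i + j) :: 'a)"
    by (simp only: of_nat_eq_iff_cong_CHAR CHAR_eq cong_def mod_mod_trivial)
  hence "add_char p n (x + y) = \<omega> ((i + j) mod p)"
    using i j prime_gt_0_nat[OF prime_p]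
    by (intro add_char_eq_root_of_unity[unfolded \<omega>_def[symmetric]]) (simp_all add: abs_trace_add)
  also have "\<dots> = \<omega> (i + j)"
    unfolding \<omega>_def using prime_gt_0_nat[OF prime_p] complex_root_unity_eq[of p "(i + j) mod p" "i + j"]
    by simp
  also have "\<dots> = \<omega> i * \<omega> j"
    by (simp add: \<omega>_def add_divide_distrib distrib_left exp_add)
  also have "\<dots> = add_char p n x * add_char p n y"
    using i j by (simp add: add_char_eq_root_of_unity \<omega>_def)
  finally show ?thesis .
qed

lemma add_char_eq_1_iff: "add_char p n (x::'a) = 1 \<longleftrightarrow> abs_trace p n x = 0"
proof -
  obtain k where "k < p" and k: "of_nat k = abs_trace p n x"
    using abs_trace_in_prime_field by blast
  hence "add_char p n x = 1 \<longleftrightarrow> p dvd k"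
    using prime_gt_0_nat[OF prime_p] by (simp add: add_char_eq_root_of_unity complex_root_unity_eq_1)
  also have "\<dots> \<longleftrightarrow> k = 0"
    using \<open>k < p\<close> nat_dvd_not_less[of k p] by auto
  also have "\<dots> \<longleftrightarrow> abs_trace p n x = 0"
    using \<open>k < p\<close> k of_nat_eq_of_nat_below_char[of k 0] prime_gt_0_nat[OF prime_p] by auto
  finally show ?thesis .
qed

lemma add_char_zero: "add_char p n (0::'a) = 1"
  using add_char_eq_1_iff abs_trace_zero by blast

lemma sum_add_char_mult:
  assumes "\<And>u v. u \<in> A \<Longrightarrow> v \<in> A \<Longrightarrow> u + v \<in> A"
  shows "(\<Sum>c\<in>A. add_char p n (c * w)) =
    (if \<forall>c\<in>A. abs_trace p n (c * (w::'a)) = 0 then of_nat (card A) else 0)"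
proof (cases "\<forall>c\<in>A. abs_trace p n (c * w) = 0")
  case True
  hence "add_char p n (c * w) = 1" if "c \<in> A" for c
    using that add_char_eq_1_iff by blast
  thus ?thesis
    using True by simp
next
  case False
  then obtain c0 where "c0 \<in> A" and "abs_trace p n (c0 * w) \<noteq> 0"
    by blast
  have "(+) c0 ` A = A"
    using assms[OF \<open>c0 \<in> A\<close>] by (intro endo_inj_surj) auto
  hence "(\<Sum>c\<in>A. add_char p n (c * w)) = (\<Sum>c\<in>A. add_char p n ((c0 + c) * w))"
    using sum.reindex[of "(+) c0" A "\<lambda>c. add_char p n (c * w)"] by simp
  also have "\<dots> = add_char p n (c0 * w) * (\<Sum>c\<in>A. add_char p n (c * w))"
    by (simp add: distrib_right add_char_add sum_distrib_left)
  finally have "(1 - add_char p n (c0 * w)) * (\<Sum>c\<in>A. add_char p n (c * w)) = 0"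
    by (simp add: algebra_simps)
  moreover have "add_char p n (c0 * w) \<noteq> 1"
    using \<open>abs_trace p n (c0 * w) \<noteq> 0\<close> add_char_eq_1_iff by blast
  ultimately have "(\<Sum>c\<in>A. add_char p n (c * w)) = 0"
    by simp
  thus ?thesis
    by (simp only: False if_False)
qed

lemma sum_add_char_subfield:
  assumes "0 < m" and "n = m * d"
  shows "(\<Sum>c | c ^ (p ^ m) = c. add_char p n (c * w)) =
    (if rel_trace (p ^ m) d (w::'a) = 0 then of_nat (p ^ m) else 0)"
proof -
  define R where "R = rel_trace (p ^ m) d w"
  have R_fixed: "R ^ (p ^ m) = R"
    unfolding R_def using power_card_eq assms(2) by (intro rel_trace_fixed) (simp add: power_mult)
  have trace_eq: "abs_trace p n (c * w) = abs_trace p m (c * R)" if "c ^ (p ^ m) = c" for c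
    unfolding R_def assms(2) by (rule abs_trace_tower[OF that])
  have "(\<forall>c\<in>{c. c ^ (p ^ m) = c}. abs_trace p n (c * w) = 0) \<longleftrightarrow> R = 0"
  proof
    assume "\<forall>c\<in>{c. c ^ (p ^ m) = c}. abs_trace p n (c * w) = 0"
    thus "R = 0"
      using abs_trace_mult_nondegenerate[OF assms(1) _ R_fixed] trace_eq assms(2) by auto
  qed (simp add: trace_eq abs_trace_zero)
  moreover have "card {c::'a. c ^ (p ^ m) = c} = p ^ m"
    using card_subfield assms by simp
  ultimately show ?thesis
    unfolding R_def[symmetric]
    by (subst sum_add_char_mult) (auto simp: add_power_prime_power)
qed

lemma sum_add_char_nontrivial:
  assumes "(a::'a) \<noteq> 0"
  shows "(\<Sum>x\<in>UNIV. add_char p n (x * a)) = 0"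
  using sum_add_char_subfield[of n 1 a] n_pos assms power_card_eq by (simp add: rel_trace_def)

subsection \<open>Norm sums over a quadratic extension\<close>

context
  fixes k :: nat
  assumes n_eq: "n = 2 * k" and odd_p: "odd p"
begin

lemma two_neq_zero: "(2::'a) \<noteq> 0"
proof
  assume "(2::'a) = 0"
  hence "p dvd 2"
    using of_nat_eq_0_iff_char_dvd[of 2, where 'a='a] CHAR_eq by simp
  thus False
    using odd_p prime_ge_2_nat[OF prime_p] by (auto dest: dvd_imp_le)
qed

lemma power_prime_power_two: "(2::'a) ^ (p ^ j) = 2"
  using add_power_prime_power[of 1 1 j] by simp

lemma power_square_card_eq: "(y::'a) ^ (p ^ k * p ^ k) = y"
  using power_card_eq[of y] n_eq by (simp add: mult_2 power_add)

lemma norm_fixed: "((y::'a) ^ (p ^ k + 1)) ^ (p ^ k) = y ^ (p ^ k + 1)"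
proof -
  have "(y ^ (p ^ k + 1)) ^ (p ^ k) = y ^ (p ^ k * p ^ k) * y ^ (p ^ k)"
    by (simp add: power_mult_distrib power_mult)
  thus ?thesis
    by (simp add: power_square_card_eq)
qed

lemma card_norm_fiber:
  assumes "(u::'a) ^ (p ^ k) = u" and "u \<noteq> 0"
  shows "card {y::'a. y ^ (p ^ k + 1) = u} = p ^ k + 1"
proof -
  define Q where "Q = p ^ k"
  define T where "T = {v::'a. v ^ Q = v} - {0}"
  define F where "F v = {y::'a. y ^ (Q + 1) = v}" for v
  have "2 \<le> Q"
    unfolding Q_def using prime_ge_2_nat[OF prime_p] self_le_power[of p k] n_pos n_eq by simp
  have F_le: "card (F v) \<le> Q + 1" for v
    using card_roots_power_eq_affine_le[of "Q + 1" 0 v] \<open>2 \<le> Q\<close> by (simp add: F_def)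
  have "(\<lambda>y. y ^ (Q + 1)) ` (UNIV - {0}) \<subseteq> T"
    unfolding T_def Q_def using norm_fixed by auto
  hence "(\<Sum>v\<in>T. card {y \<in> UNIV - {0}. y ^ (Q + 1) = v}) = card (UNIV - {0::'a})"
    using sum.group[of "UNIV - {0}" T "\<lambda>y. y ^ (Q + 1)" "\<lambda>_. 1::nat"] by simp
  moreover have "{y \<in> UNIV - {0}. y ^ (Q + 1) = v} = F v" if "v \<in> T" for v
    using that unfolding T_def F_def by auto
  moreover have "card (UNIV - {0::'a}) = Q * Q - 1"
    using card_UNIV n_eq by (simp add: card_Diff_singleton Q_def mult_2 power_add)
  moreover have "card T = Q - 1"
    using card_subfield[of k] n_pos n_eq prime_gt_0_nat[OF prime_p]
    by (simp add: T_def Q_def card_Diff_singleton zero_power)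
  ultimately have "(\<Sum>v\<in>T. card (F v)) = (\<Sum>v\<in>T. Q + 1)"
    using \<open>2 \<le> Q\<close> by (simp add: algebra_simps)
  hence "card (F u) = Q + 1"
    by (rule sum_mono_inv) (use F_le assms in \<open>auto simp: T_def Q_def\<close>)
  thus ?thesis
    unfolding F_def Q_def .
qed

lemma sum_add_char_quadratic_subfield:
  assumes "(c::'a) ^ (p ^ k) = c" and "c \<noteq> 0"
  shows "(\<Sum>u | u ^ (p ^ k) = u. add_char p n (u * c)) = 0"
proof -
  have "rel_trace (p ^ k) 2 c = 2 * c"
    using assms(1) by (simp add: rel_trace_def numeral_2_eq_2)
  thus ?thesis
    using sum_add_char_subfield[of k 2 c] n_pos n_eq two_neq_zero assms(2) by simp
qed

lemma sum_add_char_norm: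
  assumes "(c::'a) ^ (p ^ k) = c" and "c \<noteq> 0"
  shows "(\<Sum>y\<in>UNIV. add_char p n (c * y ^ (p ^ k + 1))) = - of_nat (p ^ k)"
proof -
  define Q where "Q = p ^ k"
  define K where "K = {u::'a. u ^ Q = u}"
  define N where "N u = card {y::'a. y ^ (Q + 1) = u}" for u
  have "0 \<in> K"
    using prime_gt_0_nat[OF prime_p] by (simp add: K_def Q_def zero_power)
  have "{y::'a. y ^ (Q + 1) = 0} = {0}"
    by auto
  hence N_0: "N 0 = 1"
    by (simp add: N_def)
  have N_nonzero: "N u = Q + 1" if "u \<in> K - {0}" for u
    using that card_norm_fiber by (simp add: N_def K_def Q_def)
  have "(\<lambda>y. y ^ (Q + 1)) ` UNIV \<subseteq> K"
    unfolding K_def Q_def using norm_fixed by auto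
  hence "(\<Sum>y\<in>UNIV. add_char p n (c * y ^ (Q + 1))) = (\<Sum>u\<in>K. of_nat (N u) * add_char p n (u * c))"
    using sum.group[of UNIV K "\<lambda>y. y ^ (Q + 1)" "\<lambda>y. add_char p n (c * y ^ (Q + 1))"]
    by (simp add: N_def mult.commute)
  also have "\<dots> = 1 + of_nat (Q + 1) * (\<Sum>u\<in>K - {0}. add_char p n (u * c))"
    using \<open>0 \<in> K\<close> add_char_zero
    by (simp add: sum.remove N_0 N_nonzero sum_distrib_left del: of_nat_add)
  also have "\<dots> = 1 + of_nat (Q + 1) * ((\<Sum>u\<in>K. add_char p n (u * c)) - 1)"
    using \<open>0 \<in> K\<close> add_char_zero by (simp add: sum_diff1)
  also have "\<dots> = - of_nat Q"
    using sum_add_char_quadratic_subfield[OF assms] by (simp add: K_def Q_def)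
  finally show ?thesis
    unfolding Q_def .
qed

lemma sum_add_char_norm_linear:
  assumes "(c::'a) ^ (p ^ k) = c" and "c \<noteq> 0"
  shows "(\<Sum>x\<in>UNIV. add_char p n (c * x ^ (p ^ k + 1) + a * x))
    = add_char p n (- (a ^ (p ^ k + 1)) / (4 * c)) * (\<Sum>y\<in>UNIV. add_char p n (c * y ^ (p ^ k + 1)))"
proof -
  define Q where "Q = p ^ k"
  \<comment> \<open>c b^Q = -a/2, so the cross term Z = c b y^Q has Z^Q = -a y/2 and Z + a y/2 = Z - Z^Q has trace 0\<close>
  define b where "b = - (a ^ Q) / (2 * c)"
  define D where "D = - (a ^ (Q + 1)) / (4 * c)"
  have "(4::'a) \<noteq> 0"
    using two_neq_zero mult_eq_0_iff[of "2::'a" 2] by simp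
  have b_Q: "b ^ Q = - a / (2 * c)"
    using assms(1) power_square_card_eq[of a]
    by (simp add: b_def Q_def power_divide power_mult_distrib minus_power_prime_power
        power_prime_power_two flip: power_mult)
  have trace_shift: "abs_trace p n (c * (y + b) ^ (Q + 1) + a * (y + b)) = abs_trace p n (c * y ^ (Q + 1) + D)"
    for y
  proof -
    define Z where "Z = c * b * y ^ Q"
    have c_b_Q: "c * b ^ Q = - a / 2"
      using b_Q assms(2) by simp
    have "Z ^ Q = c * b ^ Q * y"
      using assms(1) power_square_card_eq[of y] by (simp add: Z_def Q_def power_mult_distrib flip: power_mult)
    hence "Z ^ Q = - (a * y / 2)"
      by (simp add: c_b_Q)
    have "c * (y + b) ^ (Q + 1) + a * (y + b) = c * y ^ (Q + 1) + Z + c * b ^ Q * y + c * b ^ Q * b + a * y + a * b"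
      by (simp add: Q_def add_power_prime_power Z_def algebra_simps)
    also have "\<dots> = c * y ^ (Q + 1) + Z + a * y / 2 + a * b / 2"
      unfolding c_b_Q using two_neq_zero \<open>(4::'a) \<noteq> 0\<close> by (simp add: field_simps)
    also have "a * b / 2 = D"
      using assms(2) two_neq_zero \<open>(4::'a) \<noteq> 0\<close> by (simp add: b_def D_def field_simps)
    finally have "c * (y + b) ^ (Q + 1) + a * (y + b) = (c * y ^ (Q + 1) + D) + (Z - Z ^ Q)"
      using \<open>Z ^ Q = - (a * y / 2)\<close> by simp
    thus ?thesis
      by (simp add: abs_trace_add abs_trace_diff_power_prime_power Q_def)
  qed
  have "(\<Sum>x\<in>UNIV. add_char p n (c * x ^ (Q + 1) + a * x))
      = (\<Sum>y\<in>UNIV. add_char p n (c * (y + b) ^ (Q + 1) + a * (y + b)))"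
    by (rule sum.reindex_bij_witness[of _ "\<lambda>y. y + b" "\<lambda>x. x - b"]) auto
  also have "\<dots> = (\<Sum>y\<in>UNIV. add_char p n (c * y ^ (Q + 1) + D))"
    unfolding add_char_def trace_shift ..
  also have "\<dots> = add_char p n D * (\<Sum>y\<in>UNIV. add_char p n (c * y ^ (Q + 1)))"
    by (simp add: add_char_add sum_distrib_left mult.commute)
  finally show ?thesis
    unfolding Q_def D_def .
qed

lemma sum_add_char_subfield_inverse:
  "(\<Sum>c \<in> {c. c ^ (p ^ m) = c} - {0}. add_char p n (- w / (4 * c)))
    = (\<Sum>c | c ^ (p ^ m) = c. add_char p n (c * (w::'a))) - 1"
proof -
  define K where "K = {c::'a. c ^ (p ^ m) = c}"
  define \<iota> where "\<iota> c = - 1 / (4 * c)" for c :: 'a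
  have "(4::'a) \<noteq> 0"
    using two_neq_zero mult_eq_0_iff[of "2::'a" 2] by simp
  have "(4::'a) ^ (p ^ m) = 4"
    using power_prime_power_two[of m] power_mult_distrib[of "2::'a" 2 "p ^ m"] by simp
  have involution: "\<iota> (\<iota> c) = c" for c
    using \<open>(4::'a) \<noteq> 0\<close> by (cases "c = 0") (simp_all add: \<iota>_def)
  have maps_to: "\<iota> c \<in> K - {0}" if "c \<in> K - {0}" for c
    using that \<open>(4::'a) \<noteq> 0\<close> \<open>(4::'a) ^ (p ^ m) = 4\<close>
    by (simp add: \<iota>_def K_def minus_power_prime_power power_divide power_mult_distrib)
  have "\<iota> c * w = - w / (4 * c)" for c
    by (simp add: \<iota>_def)
  hence "(\<Sum>c\<in>K - {0}. add_char p n (- w / (4 * c))) = (\<Sum>c\<in>K - {0}. add_char p n (c * w))"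
    by (intro sum.reindex_bij_witness[of _ \<iota> \<iota>]) (simp_all only: involution maps_to)
  also have "\<dots> = (\<Sum>c\<in>K. add_char p n (c * w)) - 1"
    using prime_gt_0_nat[OF prime_p] add_char_zero by (simp add: sum_diff1 K_def zero_power)
  finally show ?thesis
    unfolding K_def .
qed

end

subsection \<open>Elements whose norm has vanishing relative trace\<close>

context
  fixes t s :: nat
  assumes n_eq: "n = 2 * t * s" and odd_p: "odd p"
begin

lemma n_eq_twice: "n = 2 * (t * s)"
  using n_eq by simp

lemma sum_add_char_rel_trace:
  assumes "(u::'a) ^ (p ^ (t * s)) = u"
  shows "(\<Sum>c | c ^ (p ^ t) = c. add_char p n (c * u))
    = (if rel_trace (p ^ t) s u = 0 then of_nat (p ^ t) else 0)"
proof -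
  have "rel_trace (p ^ t) (s * 2) u = 2 * rel_trace (p ^ t) s u"
    using rel_trace_mult_period[of u "p ^ t" s 2] assms by (simp add: power_mult)
  moreover have "0 < t"
    using n_pos n_eq by simp
  ultimately show ?thesis
    using sum_add_char_subfield[of t "s * 2" u] n_eq two_neq_zero[OF n_eq_twice odd_p]
    by (simp add: mult_ac)
qed

lemma sum_add_char_rel_trace_zero_norm:
  assumes "(a::'a) \<noteq> 0"
  shows "of_nat (p ^ t) * (\<Sum>x | rel_trace (p ^ t) s (x ^ (p ^ (t * s) + 1)) = 0. add_char p n (a * x))
    = - of_nat (p ^ (t * s))
      * ((if rel_trace (p ^ t) s (a ^ (p ^ (t * s) + 1)) = 0 then of_nat (p ^ t) else 0) - 1)"
proof -
  define Q where "Q = p ^ (t * s)"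
  define K where "K = {c::'a. c ^ (p ^ t) = c}"
  define I where "I u = (\<Sum>c\<in>K. add_char p n (c * u))" for u
  have I_norm: "I (x ^ (Q + 1)) = (if rel_trace (p ^ t) s (x ^ (Q + 1)) = 0 then of_nat (p ^ t) else 0)"
    for x
    unfolding I_def K_def Q_def by (rule sum_add_char_rel_trace[OF norm_fixed[OF n_eq_twice odd_p]])
  have fixed_Q: "c ^ Q = c" if "c \<in> K" for c
    using that power_power_fixed[of c "p ^ t" s] by (simp add: K_def Q_def power_mult)
  have "of_nat (p ^ t) * (\<Sum>x | rel_trace (p ^ t) s (x ^ (Q + 1)) = 0. add_char p n (a * x))
      = (\<Sum>x\<in>UNIV. if rel_trace (p ^ t) s (x ^ (Q + 1)) = 0 then of_nat (p ^ t) * add_char p n (a * x) else 0)"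
    unfolding sum_distrib_left by (rule sum.inter_filter[of UNIV, simplified]) simp
  also have "\<dots> = (\<Sum>x\<in>UNIV. I (x ^ (Q + 1)) * add_char p n (a * x))"
    by (intro sum.cong refl) (simp only: I_norm, simp)
  also have "\<dots> = (\<Sum>c\<in>K. \<Sum>x\<in>UNIV. add_char p n (c * x ^ (Q + 1) + a * x))"
    unfolding I_def by (subst sum.swap) (simp add: sum_distrib_right add_char_add)
  also have "\<dots> = (\<Sum>c\<in>K - {0}. add_char p n (- (a ^ (Q + 1)) / (4 * c)) * - of_nat Q)"
  proof -
    have "0 \<in> K"
      using prime_gt_0_nat[OF prime_p] by (simp add: K_def zero_power)
    moreover have "(\<Sum>x\<in>UNIV. add_char p n (a * x)) = 0"
      using sum_add_char_nontrivial[OF assms] by (simp add: mult.commute)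
    moreover have "(\<Sum>x\<in>UNIV. add_char p n (c * x ^ (Q + 1) + a * x))
        = add_char p n (- (a ^ (Q + 1)) / (4 * c)) * - of_nat Q" if "c \<in> K - {0}" for c
    proof -
      have c: "c ^ (p ^ (t * s)) = c" "c \<noteq> 0"
        using that fixed_Q by (auto simp: Q_def)
      show ?thesis
        unfolding Q_def sum_add_char_norm_linear[OF n_eq_twice odd_p c]
          sum_add_char_norm[OF n_eq_twice odd_p c] ..
    qed
    ultimately show ?thesis
      by (subst sum.remove[OF finite \<open>0 \<in> K\<close>]) simp
  qed
  also have "\<dots> = - of_nat Q * (I (a ^ (Q + 1)) - 1)"
    using sum_add_char_subfield_inverse[OF n_eq_twice odd_p, where m = t and w = "a ^ (Q + 1)"]
    by (simp add: I_def K_def sum_negf mult.commute flip: sum_distrib_left)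
  finally show ?thesis
    by (simp only: Q_def I_norm[unfolded Q_def])
qed

end

end

theorem mainTheorem10:
  fixes p t s :: nat and a :: "'a::{field,finite}"
  assumes "prime p" and "odd p" and "t > 0" and "s > 0"
    and "card (UNIV :: 'a set) = ((p ^ t) ^ s) ^ 2"
    and "a \<noteq> 0"
  shows "(let r = p ^ t; q = r ^ s;
             P = (\<Sum>x\<in>{x::'a. rel_trace r s (x ^ (q + 1)) = 0}. add_char p (2 * t * s) (a * x))
          in (rel_trace r s (a ^ (q + 1)) = 0 \<longrightarrow> P = - (of_nat q / of_nat r) * (of_nat r - 1))
           \<and> (rel_trace r s (a ^ (q + 1)) \<noteq> 0 \<longrightarrow> P = of_nat q / of_nat r))"
proof -
  define r q where "r = p ^ t" and "q = p ^ (t * s)"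
  define P where "P = (\<Sum>x | rel_trace r s (x ^ (q + 1)) = 0. add_char p (2 * t * s) (a * x))"
  have "CARD('a) = p ^ (2 * t * s)"
    using assms(5) by (simp add: mult_ac flip: power_mult)
  hence "of_nat r * P = - of_nat q * ((if rel_trace r s (a ^ (q + 1)) = 0 then of_nat r else 0) - 1)"
    unfolding P_def r_def q_def
    using sum_add_char_rel_trace_zero_norm[OF assms(1) _ refl assms(2,6)] by blast
  moreover have "(of_nat r :: complex) \<noteq> 0"
    using assms(1) by (simp add: r_def prime_gt_0_nat)
  ultimately have "(rel_trace r s (a ^ (q + 1)) = 0 \<longrightarrow> P = - (of_nat q / of_nat r) * (of_nat r - 1))
      \<and> (rel_trace r s (a ^ (q + 1)) \<noteq> 0 \<longrightarrow> P = of_nat q / of_nat r)"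
    by (auto simp: field_simps)
  thus ?thesis
    unfolding Let_def P_def r_def q_def by (simp add: power_mult)
qed

end
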